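(* Let $G$ be a finite simple undirected graph without isolated vertices, and let $H$ be a subgraph of $G$ with $V(H)=V(G)$, also without isolated vertices. If $\gamma_t(H)=\gamma_t(G)$, then $\tau(H)\le \tau(G)$.
   Context: A set $D \subseteq V(G)$ is a total dominating set (TDS) of $G$ if every vertex of $G$ has a neighbor in $D$. $\gamma_t(G)$ is the minimum cardinality of a TDS of $G$; a TDS of that cardinality is a $\gamma_t(G)$-set, and $\tau(G)$ is the number of $\gamma_t(G)$-sets. *)

theory Defs
  imports Main
begin

definition simple_graph :: "'a set \<Rightarrow> 'a set set \<Rightarrow> bool" where
  "simple_graph V E \<longleftrightarrow> finite V \<and> (\<forall>e\<in>E. e \<subseteq> V \<and> card e = 2)"

definition adjacent :: "'a set set \<Rightarrow> 'a \<Rightarrow> 'a \<Rightarrow> bool" where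
  "adjacent E u v \<longleftrightarrow> {u, v} \<in> E"

definition no_isolated :: "'a set \<Rightarrow> 'a set set \<Rightarrow> bool" where
  "no_isolated V E \<longleftrightarrow> (\<forall>v\<in>V. \<exists>u\<in>V. adjacent E v u)"

definition is_tds :: "'a set \<Rightarrow> 'a set set \<Rightarrow> 'a set \<Rightarrow> bool" where
  "is_tds V E D \<longleftrightarrow> D \<subseteq> V \<and> (\<forall>v\<in>V. \<exists>u\<in>D. adjacent E v u)"

definition gamma_t :: "'a set \<Rightarrow> 'a set set \<Rightarrow> nat" where
  "gamma_t V E = (LEAST k. \<exists>D. is_tds V E D \<and> card D = k)"

definition gamma_t_sets :: "'a set \<Rightarrow> 'a set set \<Rightarrow> 'a set set" where
  "gamma_t_sets V E = {D. is_tds V E D \<and> card D = gamma_t V E}"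

definition tau :: "'a set \<Rightarrow> 'a set set \<Rightarrow> nat" where
  "tau V E = card (gamma_t_sets V E)"

end

theory Submission
  imports Defs
begin

text \<open>Adding edges preserves total domination, so when the two graphs have the same total
  domination number every \<open>\<gamma>\<^sub>t(H)\<close>-set is a \<open>\<gamma>\<^sub>t(G)\<close>-set; both families live in the
  finite power set of \<open>V\<close>.\<close>

lemma is_tds_mono_edges:
  assumes "F \<subseteq> E" and "is_tds V F D"
  shows "is_tds V E D"
  using assms unfolding is_tds_def adjacent_def by blast

lemma gamma_t_sets_mono_edges:
  assumes "F \<subseteq> E" and "gamma_t V F = gamma_t V E"
  shows "gamma_t_sets V F \<subseteq> gamma_t_sets V E"
  using assms is_tds_mono_edges unfolding gamma_t_sets_def by auto

lemma gamma_t_sets_subset_Pow: "gamma_t_sets V E \<subseteq> Pow V"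
  unfolding gamma_t_sets_def is_tds_def by blast

lemma finite_gamma_t_sets:
  assumes "finite V"
  shows "finite (gamma_t_sets V E)"
  using gamma_t_sets_subset_Pow assms by (rule finite_subset[OF _ finite_Pow_iff[THEN iffD2]])

theorem proposition2p7:
  fixes V :: "'a set" and E F :: "'a set set"
  assumes "simple_graph V E" and "no_isolated V E"
    and "F \<subseteq> E" and "no_isolated V F"
    and "gamma_t V F = gamma_t V E"
  shows "tau V F \<le> tau V E"
proof -
  have "finite V"
    using assms(1) unfolding simple_graph_def by simp
  then have "finite (gamma_t_sets V E)"
    by (rule finite_gamma_t_sets)
  moreover have "gamma_t_sets V F \<subseteq> gamma_t_sets V E"
    using assms(3,5) by (rule gamma_t_sets_mono_edges)
  ultimately show ?thesis
    unfolding tau_def by (rule card_mono)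
qed

end
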